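(* Let $\epsilon\in\{1,-1\}\subseteq\mathbb{F}_{p^m}$, $\phi(x)=x^2+\epsilon\gamma x+\frac{\gamma^2}{2}$, $\mathsf{R}_{\epsilon\gamma}=R[x]/\langle\phi(x)^{p^s}\rangle$, and let $\mathcal{I}$ be an ideal of $\mathsf{R}_{\epsilon\gamma}$ (notation and parameter ranges as in the classification into Types I–IV below). Then: (a) if $\mathcal{I}=\{0\}$, $|\mathcal{I}|=1$; (b) if $\mathcal{I}=\mathsf{R}_{\epsilon\gamma}$, $|\mathcal{I}|=p^{4mp^s}$; (c) if $\mathcal{I}=\langle u\phi(x)^i\rangle$ with $0\le i\le p^s-1$, $|\mathcal{I}|=p^{2m(p^s-i)}$; (d) if $\mathcal{I}=\langle\phi(x)^i+u\phi(x)^th(x)\rangle$ is of Type III, then $|\mathcal{I}|=p^{4m(p^s-i)}$ if either $h(x)=0$, or $h(x)$ is a unit and $1\le i\le\frac{p^s+t}{2}$; and $|\mathcal{I}|=p^{2m(p^s-t)}$ if $h(x)$ is a unit and $\frac{p^s+t}{2}<i\le p^s-1$; (e) if $\mathcal{I}=\langle\phi(x)^i+u\phi(x)^th(x),\ u\phi(x)^w\rangle$ is of Type IV, $|\mathcal{I}|=p^{2m(2p^s-i-w)}$.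
   Context: Let $p$ be an odd prime and $m,s$ positive integers with $p^m\equiv 3\pmod 4$; $\mathbb{F}_{p^m}$ is the field with $p^m$ elements and $R=\mathbb{F}_{p^m}[u]/\langle u^2\rangle$. Fix $\alpha\in\mathbb{F}_{p^m}\setminus\{0\}$ non-square, $\alpha_0^{p^s}=\alpha$, $\gamma\in\mathbb{F}_{p^m}$ with $\gamma^4+4\alpha_0=0$. Ideal types of $\mathsf{R}_{\epsilon\gamma}$: Type III ideals are $\langle\phi^i+u\phi^th\rangle$ with $1\le i\le p^s-1$, $0\le t<i$, and $h=0$ or $h$ a unit of the form $\sum_{j=0}^{i-t-1}(a_{j0}x+b_{j0})\phi^j$ ($a_{j0},b_{j0}\in\mathbb{F}_{p^m}$, $a_{00}x+b_{00}\ne0$). Type IV ideals are $\langle\phi^i+u\phi^th,\ u\phi^w\rangle$ with $1\le i\le p^s-1$, $0\le t<w$, $h=0$ or $h$ a unit of the form $\sum_{j=0}^{w-t-1}(a_{j0}x+b_{j0})\phi^j$ with $a_{00}x+b_{00}\neq 0$, and $w<U$ where $U$ is the least integer with $u\phi^U\in\langle\phi^i+u\phi^th\rangle$. *)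

theory Defs
  imports "HOL-Computational_Algebra.Polynomial" "HOL-Library.Cardinality"
begin

text \<open>Elements of R[x], R = F[u]/(u^2), are written as pairs (a, b) of polynomials
  over F, standing for a(x) + u b(x).\<close>

definition rmul :: "'a::comm_ring_1 poly \<times> 'a poly \<Rightarrow> 'a poly \<times> 'a poly \<Rightarrow> 'a poly \<times> 'a poly" where
  "rmul x y = (fst x * fst y, fst x * snd y + snd x * fst y)"

definition rred :: "'a::field poly \<Rightarrow> 'a poly \<times> 'a poly \<Rightarrow> 'a poly \<times> 'a poly" where
  "rred N x = (fst x mod N, snd x mod N)"

text \<open>The ideal of R[x]/(N) generated by (the residues of) the list gs, as a set of
  canonical representatives.\<close>
definition gen_ideal :: "'a::field poly \<Rightarrow> ('a poly \<times> 'a poly) list \<Rightarrow> ('a poly \<times> 'a poly) set" where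
  "gen_ideal N gs = {rred N ((\<Sum>j<length gs. fst (rmul (r j) (gs ! j))),
                             (\<Sum>j<length gs. snd (rmul (r j) (gs ! j)))) | r. True}"

end

(* Write an element of R[x]/(\<phi>^n) as a + u b with a, b in F[x]/(\<phi>^n), q = |F| and d = deg \<phi>.
   An ideal I containing \<phi>^i + u f and u \<phi>^w (w \<le> i, \<phi>^w dividing \<phi>^(n-i) f) consists of
   the elements \<phi>^i c + u (c f + \<phi>^w z), with c a residue modulo \<phi>^(n-i) and z a residue
   modulo \<phi>^(n-w) chosen independently; hence |I| = q^(d(n-i)) q^(d(n-w)).  For a single generator
   \<phi>^i + u \<phi>^t h the u-part is generated by u \<phi>^i and by \<phi>^(n-i) (\<phi>^i + u \<phi>^t h) = u \<phi>^(n-i+t) h,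
   and when \<phi> does not divide h the factor h is invertible modulo \<phi>^n, so w = min(i, n-i+t).
   This needs \<phi> irreducible: a root x of \<phi> would make \<alpha>0 = -\<gamma>^4/4 = ((2x + \<epsilon>\<gamma>)\<gamma>/2)^2 a square,
   and then \<alpha> = \<alpha>0^(p^s) a square as well. *)

theory Submission
  imports Defs "HOL-Computational_Algebra.Polynomial_Factorial"
begin

lemma gen_ideal_single: "gen_ideal N [g] = {rred N (rmul r g) | r. True}"
proof -
  have "gen_ideal N [g] = {rred N (rmul (r 0) g) | r :: nat \<Rightarrow> _. True}"
    unfolding gen_ideal_def by simp
  also have "\<dots> = {rred N (rmul r g) | r. True}"
  proof (rule Collect_cong, rule iffI)
    fix x assume "\<exists>r :: nat \<Rightarrow> _. x = rred N (rmul (r 0) g) \<and> True"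
    then show "\<exists>r. x = rred N (rmul r g) \<and> True" by blast
  next
    fix x assume "\<exists>r. x = rred N (rmul r g) \<and> True"
    then obtain r where "x = rred N (rmul r g)" by blast
    then show "\<exists>r :: nat \<Rightarrow> _. x = rred N (rmul (r 0) g) \<and> True"
      by (intro exI[of _ "\<lambda>_. r"]) simp
  qed
  finally show ?thesis .
qed

lemma gen_ideal_pair:
  "gen_ideal N [g, g'] =
     {rred N (fst (rmul r g) + fst (rmul r' g'), snd (rmul r g) + snd (rmul r' g')) | r r'. True}"
  (is "_ = {?e r r' | r r'. True}")
proof -
  have "gen_ideal N [g, g'] = {?e (r 0) (r 1) | r :: nat \<Rightarrow> _. True}"
    unfolding gen_ideal_def by (simp add: numeral_2_eq_2)
  also have "\<dots> = {?e r r' | r r'. True}"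
  proof (rule Collect_cong, rule iffI)
    fix x assume "\<exists>r :: nat \<Rightarrow> _. x = ?e (r 0) (r 1) \<and> True"
    then show "\<exists>r r'. x = ?e r r' \<and> True" by blast
  next
    fix x assume "\<exists>r r'. x = ?e r r' \<and> True"
    then obtain r r' where "x = ?e r r'" by blast
    then show "\<exists>r :: nat \<Rightarrow> _. x = ?e (r 0) (r 1) \<and> True"
      by (intro exI[of _ "\<lambda>j. if j = 0 then r else r'"]) simp
  qed
  finally show ?thesis .
qed

lemma gen_ideal_zero: "gen_ideal N [(0, 0)] = {(0, 0)}"
  by (auto simp: gen_ideal_single rmul_def rred_def)

lemma rred_rmul_in_gen_ideal: "rred N (rmul r g) \<in> gen_ideal N [g]"
  unfolding gen_ideal_single by blast

lemma u_mult_in_gen_ideal: "rred N (0, A) \<in> gen_ideal N [(A, B)]"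
proof -
  have "rmul (0, 1) (A, B) = (0, A)" by (simp add: rmul_def)
  then show ?thesis by (metis rred_rmul_in_gen_ideal)
qed

lemma rred_rmul_rred: "rred N (rmul r (rred N g)) = rred N (rmul r g)"
proof -
  have "(a * (b mod N) + c * (d mod N)) mod N = (a * b + c * d) mod N" for a b c d :: "'a poly"
    by (rule mod_add_cong) (simp_all add: mod_mult_right_eq)
  then show ?thesis by (simp add: rred_def rmul_def mod_mult_right_eq)
qed

lemma gen_ideal_rred: "gen_ideal N (map (rred N) gs) = gen_ideal N gs"
proof -
  have sum_mod: "(\<Sum>j<length gs. F j (map (rred N) gs ! j)) mod N = (\<Sum>j<length gs. F j (gs ! j)) mod N"
    if F: "\<And>j g. F j (rred N g) mod N = F j g mod N" for F :: "nat \<Rightarrow> _ \<Rightarrow> 'a poly"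
  proof -
    have "(\<Sum>j<length gs. F j (map (rred N) gs ! j)) mod N
        = (\<Sum>j<length gs. F j (map (rred N) gs ! j) mod N) mod N"
      by (simp only: mod_sum_eq)
    also have "\<dots> = (\<Sum>j<length gs. F j (gs ! j) mod N) mod N"
      using F by (simp add: nth_map)
    also have "\<dots> = (\<Sum>j<length gs. F j (gs ! j)) mod N"
      by (simp only: mod_sum_eq)
    finally show ?thesis .
  qed
  have "fst (rmul r (rred N g)) mod N = fst (rmul r g) mod N"
    and "snd (rmul r (rred N g)) mod N = snd (rmul r g) mod N" for r g
    using rred_rmul_rred[of N r g] by (simp_all add: rred_def prod_eq_iff)
  then have "rred N (\<Sum>j<length gs. fst (rmul (r j) (map (rred N) gs ! j)),
                     \<Sum>j<length gs. snd (rmul (r j) (map (rred N) gs ! j)))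
           = rred N (\<Sum>j<length gs. fst (rmul (r j) (gs ! j)),
                     \<Sum>j<length gs. snd (rmul (r j) (gs ! j)))" for r
    using sum_mod[of "\<lambda>j. fst \<circ> rmul (r j)"] sum_mod[of "\<lambda>j. snd \<circ> rmul (r j)"]
    by (simp add: rred_def)
  then show ?thesis
    unfolding gen_ideal_def length_map by (simp only:)
qed

lemma gen_ideal_cong:
  assumes "map (rred N) gs = map (rred N) gs'"
  shows "gen_ideal N gs = gen_ideal N gs'"
proof -
  have "gen_ideal N gs = gen_ideal N (map (rred N) gs)" by (simp only: gen_ideal_rred)
  also have "\<dots> = gen_ideal N (map (rred N) gs')" by (simp only: assms)
  also have "\<dots> = gen_ideal N gs'" by (simp only: gen_ideal_rred)
  finally show ?thesis .
qed

lemma gen_ideal_pair_redundant: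
  assumes "rred N g' \<in> gen_ideal N [g]"
  shows "gen_ideal N [g, g'] = gen_ideal N [g]"
proof -
  obtain c where "rred N g' = rred N (rmul c g)"
    using assms unfolding gen_ideal_single by blast
  then have "gen_ideal N [g, g'] = gen_ideal N [g, rmul c g]"
    by (intro gen_ideal_cong) (simp add: rred_def prod_eq_iff)
  also have "\<dots> = gen_ideal N [g]"
    unfolding gen_ideal_pair gen_ideal_single
  proof (intro Collect_cong iffI; elim exE conjE)
    fix x r r'
    assume x: "x = rred N (fst (rmul r g) + fst (rmul r' (rmul c g)),
                            snd (rmul r g) + snd (rmul r' (rmul c g)))"
    show "\<exists>r. x = rred N (rmul r g) \<and> True"
      by (rule exI[of _ "(fst r + fst (rmul r' c), snd r + snd (rmul r' c))"])
        (simp add: x rmul_def algebra_simps)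
  next
    fix x r assume x: "x = rred N (rmul r g)"
    show "\<exists>r r'. x = rred N (fst (rmul r g) + fst (rmul r' (rmul c g)),
                                   snd (rmul r g) + snd (rmul r' (rmul c g))) \<and> True"
      by (rule exI[of _ r], rule exI[of _ "(0, 0)"]) (simp add: x rmul_def)
  qed
  finally show ?thesis .
qed

section \<open>Residues modulo a polynomial\<close>

definition poly_residues :: "'a::field poly \<Rightarrow> 'a poly set" where
  "poly_residues M = {c. c mod M = c}"

lemma mem_poly_residues_iff_coeff:
  fixes M c :: "'a::field poly"
  assumes "M \<noteq> 0"
  shows "c \<in> poly_residues M \<longleftrightarrow> (\<forall>j\<ge>degree M. coeff c j = 0)"
proof
  assume "c \<in> poly_residues M"
  then have "c = 0 \<or> degree c < degree M"
    using degree_mod_less[OF assms, of c] by (auto simp: poly_residues_def)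
  then show "\<forall>j\<ge>degree M. coeff c j = 0" by (auto intro: coeff_eq_0)
next
  assume "\<forall>j\<ge>degree M. coeff c j = 0"
  then have "c = 0 \<or> degree c < degree M"
    by (metis leading_coeff_0_iff not_le_imp_less)
  then show "c \<in> poly_residues M" by (auto simp: poly_residues_def mod_poly_less)
qed

lemma card_poly_residues:
  fixes M :: "'a::{finite,field} poly"
  assumes "M \<noteq> 0"
  shows "card (poly_residues M) = CARD('a) ^ degree M"
proof -
  let ?d = "degree M" and ?L = "{xs. set xs \<subseteq> (UNIV :: 'a set) \<and> length xs = degree M}"
  have "bij_betw (\<lambda>c. map (coeff c) [0..<?d]) (poly_residues M) ?L"
  proof (rule bij_betw_byWitness[where f' = Poly])
    show "\<forall>c\<in>poly_residues M. Poly (map (coeff c) [0..<?d]) = c"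
      by (auto simp: mem_poly_residues_iff_coeff[OF assms] nth_default_def intro!: poly_eqI)
    show "\<forall>xs\<in>?L. map (coeff (Poly xs)) [0..<?d] = xs"
      by (auto simp: nth_default_def intro!: nth_equalityI)
    show "Poly ` ?L \<subseteq> poly_residues M"
      by (auto simp: mem_poly_residues_iff_coeff[OF assms] nth_default_def)
  qed auto
  then show ?thesis
    using card_lists_length_eq[of "UNIV :: 'a set" ?d] by (simp add: bij_betw_same_card)
qed

lemma inverse_mod_prime_elem_power:
  fixes \<phi> h :: "'a::{finite,field} poly"
  assumes "prime_elem \<phi>" and "\<not> \<phi> dvd h"
  obtains h' where "\<phi> ^ n dvd h * h' - 1"
proof -
  let ?M = "\<phi> ^ n"
  let ?R = "poly_residues ?M"
  have "?M \<noteq> 0" using assms(1) by (simp add: prime_elem_not_zeroI)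
  then have "finite ?R" by (simp add: card_ge_0_finite card_poly_residues)
  moreover have "(\<lambda>c. (h * c) mod ?M) ` ?R \<subseteq> ?R" by (auto simp: poly_residues_def)
  moreover have "inj_on (\<lambda>c. (h * c) mod ?M) ?R"
  proof (rule inj_onI)
    fix c c' assume "c \<in> ?R" "c' \<in> ?R" and "(h * c) mod ?M = (h * c') mod ?M"
    then have "?M dvd h * c - h * c'" by (simp only: mod_eq_dvd_iff)
    then have "?M dvd h * (c - c')" by (simp only: right_diff_distrib)
    have "?M dvd c - c'"
    proof (cases "n = 0")
      case False
      then show ?thesis using prime_power_dvd_multD[OF assms(1) \<open>?M dvd h * (c - c')\<close> _ assms(2)] by simp
    qed simp
    then have "c mod ?M = c' mod ?M" by (simp only: mod_eq_dvd_iff)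
    then show "c = c'" using \<open>c \<in> ?R\<close> \<open>c' \<in> ?R\<close> by (simp add: poly_residues_def)
  qed
  ultimately have "(\<lambda>c. (h * c) mod ?M) ` ?R = ?R" by (rule endo_inj_surj)
  moreover have "1 mod ?M \<in> ?R" by (simp add: poly_residues_def)
  ultimately have "1 mod ?M \<in> (\<lambda>c. (h * c) mod ?M) ` ?R" by simp
  then obtain c where "(h * c) mod ?M = 1 mod ?M" by (elim imageE) simp
  then show ?thesis by (intro that[of c]) (simp add: mod_eq_dvd_iff)
qed

section \<open>Ideals of R[x]/(\<phi>^n)\<close>

lemma gen_ideal_phi_pow_pair:
  fixes \<phi> f :: "'a::field poly"
  assumes "\<phi> \<noteq> 0" and "w \<le> i" and "i \<le> n" and "\<phi> ^ w dvd \<phi> ^ (n - i) * f"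
  shows "gen_ideal (\<phi> ^ n) [(\<phi> ^ i, f), (0, \<phi> ^ w)] =
    (\<lambda>(c, z). (\<phi> ^ i * c, (c * f + \<phi> ^ w * z) mod \<phi> ^ n)) `
      (poly_residues (\<phi> ^ (n - i)) \<times> poly_residues (\<phi> ^ (n - w)))"
    (is "_ = ?F ` (?Ri \<times> ?Rw)")
proof -
  \<comment> \<open>c is the multiplier reduced modulo \<phi>^(n-i); the rest of it only contributes to the u-part,
    which is divisible by \<phi>^w by the divisibility hypothesis.\<close>
  have mod_i: "(\<phi> ^ i * x) mod \<phi> ^ n = \<phi> ^ i * (x mod \<phi> ^ (n - i))" for x
    using assms(3) mod_mult_mult1[of "\<phi> ^ i" x "\<phi> ^ (n - i)"] by (simp flip: power_add)
  have mod_w: "(\<phi> ^ w * x) mod \<phi> ^ n = \<phi> ^ w * (x mod \<phi> ^ (n - w))" for x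
    using assms(2,3) mod_mult_mult1[of "\<phi> ^ w" x "\<phi> ^ (n - w)"] by (simp flip: power_add)
  obtain g where g: "\<phi> ^ (n - i) * f = \<phi> ^ w * g" using assms(4) by (elim dvdE)
  have pair: "gen_ideal (\<phi> ^ n) [(\<phi> ^ i, f), (0, \<phi> ^ w)] =
    {((x0 * \<phi> ^ i) mod \<phi> ^ n, (x0 * f + x1 * \<phi> ^ i + y0 * \<phi> ^ w) mod \<phi> ^ n) | x0 x1 y0. True}"
    unfolding gen_ideal_pair by (auto simp: rmul_def rred_def add.assoc)
  show ?thesis
    unfolding pair
  proof (intro set_eqI iffI)
    fix v
    assume "v \<in> {((x0 * \<phi> ^ i) mod \<phi> ^ n, (x0 * f + x1 * \<phi> ^ i + y0 * \<phi> ^ w) mod \<phi> ^ n) | x0 x1 y0. True}"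
    then obtain x0 x1 y0
      where v: "v = ((x0 * \<phi> ^ i) mod \<phi> ^ n, (x0 * f + x1 * \<phi> ^ i + y0 * \<phi> ^ w) mod \<phi> ^ n)"
      by blast
    define c where "c = x0 mod \<phi> ^ (n - i)"
    define e where "e = x0 div \<phi> ^ (n - i) * g + x1 * \<phi> ^ (i - w) + y0"
    have "x0 * f + x1 * \<phi> ^ i + y0 * \<phi> ^ w = c * f + \<phi> ^ w * e"
    proof -
      have "x0 * f = x0 div \<phi> ^ (n - i) * (\<phi> ^ (n - i) * f) + c * f"
        unfolding c_def by (metis div_mult_mod_eq distrib_right mult.assoc)
      moreover have "\<phi> ^ i = \<phi> ^ w * \<phi> ^ (i - w)" using assms(2) by (simp flip: power_add)
      ultimately show ?thesis unfolding e_def g by (simp add: algebra_simps)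
    qed
    moreover have "(c * f + \<phi> ^ w * e) mod \<phi> ^ n = (c * f + \<phi> ^ w * (e mod \<phi> ^ (n - w))) mod \<phi> ^ n"
      by (rule mod_add_cong) (simp_all add: mod_w)
    ultimately have "v = ?F (c, e mod \<phi> ^ (n - w))"
      using v mod_i[of x0] by (simp add: c_def mult.commute)
    moreover have "(c, e mod \<phi> ^ (n - w)) \<in> ?Ri \<times> ?Rw"
      by (simp add: c_def poly_residues_def)
    ultimately show "v \<in> ?F ` (?Ri \<times> ?Rw)" by blast
  next
    fix v assume "v \<in> ?F ` (?Ri \<times> ?Rw)"
    then obtain c z where v: "v = (\<phi> ^ i * c, (c * f + \<phi> ^ w * z) mod \<phi> ^ n)" and "c mod \<phi> ^ (n - i) = c"
      by (auto simp: poly_residues_def)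
    then have "v = ((c * \<phi> ^ i) mod \<phi> ^ n, (c * f + 0 * \<phi> ^ i + z * \<phi> ^ w) mod \<phi> ^ n)"
      using mod_i[of c] by (simp add: mult.commute)
    then show "v \<in> {((x0 * \<phi> ^ i) mod \<phi> ^ n, (x0 * f + x1 * \<phi> ^ i + y0 * \<phi> ^ w) mod \<phi> ^ n) | x0 x1 y0. True}"
      by blast
  qed
qed

lemma card_gen_ideal_phi_pow_pair:
  fixes \<phi> f :: "'a::{finite,field} poly"
  assumes "\<phi> \<noteq> 0" and "w \<le> i" and "i \<le> n" and "\<phi> ^ w dvd \<phi> ^ (n - i) * f"
  shows "card (gen_ideal (\<phi> ^ n) [(\<phi> ^ i, f), (0, \<phi> ^ w)]) = CARD('a) ^ (degree \<phi> * (2 * n - i - w))"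
proof -
  let ?F = "\<lambda>(c, z). (\<phi> ^ i * c, (c * f + \<phi> ^ w * z) mod \<phi> ^ n)"
  let ?R = "poly_residues (\<phi> ^ (n - i)) \<times> poly_residues (\<phi> ^ (n - w))"
  have "inj_on ?F ?R"
  proof (rule inj_onI)
    fix x x' assume "x \<in> ?R" "x' \<in> ?R" "?F x = ?F x'"
    then obtain c z c' z' where x: "x = (c, z)" "x' = (c', z')"
      and "z \<in> poly_residues (\<phi> ^ (n - w))" "z' \<in> poly_residues (\<phi> ^ (n - w))"
      and "\<phi> ^ i * c = \<phi> ^ i * c'" and "(c * f + \<phi> ^ w * z) mod \<phi> ^ n = (c' * f + \<phi> ^ w * z') mod \<phi> ^ n"
      by (cases x, cases x') auto
    have "c = c'" using \<open>\<phi> ^ i * c = \<phi> ^ i * c'\<close> assms(1) by simp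
    then have "(\<phi> ^ w * z) mod \<phi> ^ n = (\<phi> ^ w * z') mod \<phi> ^ n"
      using \<open>(c * f + _) mod _ = _\<close> by (simp add: mod_eq_dvd_iff)
    then have "z mod \<phi> ^ (n - w) = z' mod \<phi> ^ (n - w)"
      using assms mod_mult_mult1[of "\<phi> ^ w" _ "\<phi> ^ (n - w)"] by (simp flip: power_add)
    then show "x = x'"
      using x \<open>c = c'\<close> \<open>z \<in> _\<close> \<open>z' \<in> _\<close> by (simp add: poly_residues_def)
  qed
  then have "card (?F ` ?R) = CARD('a) ^ (degree \<phi> * (n - i)) * CARD('a) ^ (degree \<phi> * (n - w))"
    using assms(1) by (simp add: card_image card_cartesian_product card_poly_residues degree_power_eq mult.commute)
  also have "\<dots> = CARD('a) ^ (degree \<phi> * ((n - i) + (n - w)))"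
    by (simp add: power_add distrib_left)
  also have "(n - i) + (n - w) = 2 * n - i - w"
    using assms(2,3) by arith
  finally show ?thesis using gen_ideal_phi_pow_pair[OF assms] by simp
qed

lemma u_phi_pow_in_gen_ideal_unit:
  fixes \<phi> h :: "'a::{finite,field} poly"
  assumes "prime_elem \<phi>" and "\<not> \<phi> dvd h" and "i \<le> n"
  shows "rred (\<phi> ^ n) (0, \<phi> ^ (n - i + t)) \<in> gen_ideal (\<phi> ^ n) [(\<phi> ^ i, \<phi> ^ t * h)]"
proof -
  obtain h' where h': "\<phi> ^ n dvd h * h' - 1"
    using inverse_mod_prime_elem_power[OF assms(1,2)] .
  have "\<phi> ^ (n - i) * \<phi> ^ i = \<phi> ^ n" and "\<phi> ^ (n - i) * \<phi> ^ t = \<phi> ^ (n - i + t)"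
    using assms(3) by (simp_all flip: power_add)
  then have "rmul (\<phi> ^ (n - i) * h', 0) (\<phi> ^ i, \<phi> ^ t * h) = (\<phi> ^ n * h', \<phi> ^ (n - i + t) + \<phi> ^ (n - i + t) * (h * h' - 1))"
    by (simp add: rmul_def algebra_simps)
  moreover have "(\<phi> ^ (n - i + t) + \<phi> ^ (n - i + t) * (h * h' - 1)) mod \<phi> ^ n = \<phi> ^ (n - i + t) mod \<phi> ^ n"
    using h' by (simp add: mod_eq_dvd_iff)
  ultimately have "rred (\<phi> ^ n) (rmul (\<phi> ^ (n - i) * h', 0) (\<phi> ^ i, \<phi> ^ t * h)) = rred (\<phi> ^ n) (0, \<phi> ^ (n - i + t))"
    by (simp add: rred_def)
  then show ?thesis by (metis rred_rmul_in_gen_ideal)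
qed

lemma card_gen_ideal_phi_pow_single:
  fixes \<phi> f :: "'a::{finite,field} poly"
  assumes "\<phi> \<noteq> 0" and "i \<le> n" and "\<phi> ^ i dvd \<phi> ^ (n - i) * f"
  shows "card (gen_ideal (\<phi> ^ n) [(\<phi> ^ i, f)]) = CARD('a) ^ (degree \<phi> * (2 * (n - i)))"
proof -
  have "gen_ideal (\<phi> ^ n) [(\<phi> ^ i, f)] = gen_ideal (\<phi> ^ n) [(\<phi> ^ i, f), (0, \<phi> ^ i)]"
    by (rule gen_ideal_pair_redundant[symmetric]) (rule u_mult_in_gen_ideal)
  moreover have "2 * n - i - i = 2 * (n - i)" by arith
  ultimately show ?thesis using card_gen_ideal_phi_pow_pair[OF assms(1) order.refl assms(2,3)] by simp
qed

lemma card_gen_ideal_u_phi_pow: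
  fixes \<phi> :: "'a::{finite,field} poly"
  assumes "\<phi> \<noteq> 0" and "i \<le> n"
  shows "card (gen_ideal (\<phi> ^ n) [(0, \<phi> ^ i)]) = CARD('a) ^ (degree \<phi> * (n - i))"
proof -
  \<comment> \<open>Modulo \<phi>^n the generator u \<phi>^i equals \<phi>^n + u \<phi>^i: this is the two-generator count with i = n.\<close>
  have "rred (\<phi> ^ n) (0, \<phi> ^ i) \<in> gen_ideal (\<phi> ^ n) [(0, \<phi> ^ i)]"
    using rred_rmul_in_gen_ideal[of "\<phi> ^ n" "(1, 0)" "(0, \<phi> ^ i)"] by (simp add: rmul_def)
  then have "gen_ideal (\<phi> ^ n) [(0, \<phi> ^ i)] = gen_ideal (\<phi> ^ n) [(0, \<phi> ^ i), (0, \<phi> ^ i)]"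
    by (rule gen_ideal_pair_redundant[symmetric])
  also have "\<dots> = gen_ideal (\<phi> ^ n) [(\<phi> ^ n, \<phi> ^ i), (0, \<phi> ^ i)]"
    by (rule gen_ideal_cong) (simp add: rred_def)
  finally show ?thesis
    using card_gen_ideal_phi_pow_pair[OF assms(1,2) order.refl, of "\<phi> ^ i"] by simp
qed

lemma card_gen_ideal_phi_pow_unit:
  fixes \<phi> h :: "'a::{finite,field} poly"
  assumes "prime_elem \<phi>" and "\<not> \<phi> dvd h" and "i \<le> n" and "n + t \<le> 2 * i"
  shows "card (gen_ideal (\<phi> ^ n) [(\<phi> ^ i, \<phi> ^ t * h)]) = CARD('a) ^ (degree \<phi> * (n - t))"
proof -
  let ?w = "n - i + t"
  have "gen_ideal (\<phi> ^ n) [(\<phi> ^ i, \<phi> ^ t * h)] = gen_ideal (\<phi> ^ n) [(\<phi> ^ i, \<phi> ^ t * h), (0, \<phi> ^ ?w)]"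
    using u_phi_pow_in_gen_ideal_unit[OF assms(1-3)] by (rule gen_ideal_pair_redundant[symmetric])
  moreover have "\<phi> ^ ?w dvd \<phi> ^ (n - i) * (\<phi> ^ t * h)"
    by (simp add: power_add mult.assoc)
  moreover have "?w \<le> i" and "2 * n - i - ?w = n - t" using assms(3,4) by arith+
  ultimately show ?thesis
    using card_gen_ideal_phi_pow_pair[of \<phi> ?w i n "\<phi> ^ t * h"] assms(1,3) by (simp add: prime_elem_not_zeroI)
qed

lemma card_gen_ideal_below_Least:
  fixes \<phi> h :: "'a::{finite,field} poly"
  assumes "prime_elem \<phi>" and "i \<le> n" and "h = 0 \<or> \<not> \<phi> dvd h"
    and w: "w < (LEAST U. rred (\<phi> ^ n) (0, \<phi> ^ U) \<in> gen_ideal (\<phi> ^ n) [(\<phi> ^ i, \<phi> ^ t * h)])"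
  shows "card (gen_ideal (\<phi> ^ n) [(\<phi> ^ i, \<phi> ^ t * h), (0, \<phi> ^ w)]) = CARD('a) ^ (degree \<phi> * (2 * n - i - w))"
proof -
  have "(LEAST U. rred (\<phi> ^ n) (0, \<phi> ^ U) \<in> gen_ideal (\<phi> ^ n) [(\<phi> ^ i, \<phi> ^ t * h)]) \<le> i"
    by (rule Least_le) (rule u_mult_in_gen_ideal)
  then have "w \<le> i" using w by linarith
  moreover have "\<phi> ^ w dvd \<phi> ^ (n - i) * (\<phi> ^ t * h)"
  proof (cases "h = 0")
    case False
    then have "(LEAST U. rred (\<phi> ^ n) (0, \<phi> ^ U) \<in> gen_ideal (\<phi> ^ n) [(\<phi> ^ i, \<phi> ^ t * h)]) \<le> n - i + t"
      using assms(3) by (intro Least_le u_phi_pow_in_gen_ideal_unit assms(1,2)) simp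
    then have "w \<le> n - i + t" using w by linarith
    moreover have "\<phi> ^ (n - i) * (\<phi> ^ t * h) = \<phi> ^ (n - i + t) * h"
      by (simp add: power_add mult.assoc)
    ultimately show ?thesis by (metis dvd_mult2 le_imp_power_dvd)
  qed simp
  ultimately show ?thesis
    using card_gen_ideal_phi_pow_pair[OF prime_elem_not_zeroI[OF assms(1)] _ assms(2)] by blast
qed

section \<open>The polynomial \<phi>\<close>

lemma exists_square_root_if_two_eq_zero:
  fixes a :: "'a::{finite,field}"
  assumes "(2::'a) = 0"
  shows "\<exists>y. y ^ 2 = a"
proof -
  have "inj (\<lambda>y::'a. y ^ 2)"
  proof (rule injI)
    fix x y :: 'a assume "x ^ 2 = y ^ 2"
    then have "(x - y) ^ 2 = 0"
      using assms by (simp add: power2_eq_square algebra_simps mult_2[symmetric])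
    then show "x = y" by simp
  qed
  then have "surj (\<lambda>y::'a. y ^ 2)" by (simp add: finite_UNIV_inj_surj)
  then have "a \<in> range (\<lambda>y::'a. y ^ 2)" by simp
  then show ?thesis by auto
qed

lemma phi_root_imp_square:
  fixes \<gamma> \<epsilon> x :: "'a::field"
  assumes "(2::'a) \<noteq> 0" and "\<epsilon> ^ 2 = 1" and "poly [:\<gamma> ^ 2 / 2, \<epsilon> * \<gamma>, 1:] x = 0"
  shows "- (\<gamma> ^ 4 / 4) = ((2 * x + \<epsilon> * \<gamma>) * \<gamma> / 2) ^ 2"
proof -
  have "x * x + \<epsilon> * \<gamma> * x + \<gamma> ^ 2 / 2 = 0"
    using assms(3) by (simp add: algebra_simps)
  moreover have "(2 * x + \<epsilon> * \<gamma>) ^ 2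
      = 4 * (x * x + \<epsilon> * \<gamma> * x + \<gamma> ^ 2 / 2) - 2 * \<gamma> ^ 2 + \<epsilon> ^ 2 * \<gamma> ^ 2"
    using assms(1) by (simp add: field_simps power2_eq_square)
  ultimately have "(2 * x + \<epsilon> * \<gamma>) ^ 2 = - (\<gamma> ^ 2)"
    using assms(2) by simp
  then show ?thesis
    using assms(1) by (simp add: power_mult_distrib power_divide)
qed

lemma irreducible_quadratic_without_root:
  fixes \<phi> :: "'a::field poly"
  assumes "degree \<phi> = 2" and "\<And>x. poly \<phi> x \<noteq> 0"
  shows "irreducible \<phi>"
proof (rule irreducibleI)
  show nz: "\<phi> \<noteq> 0" using assms(1) by auto
  show "\<not> \<phi> dvd 1" using assms(1) is_unit_iff_degree[OF nz] by simp
  have no_linear_factor: "degree q \<noteq> 1" if "\<phi> = q * r" for q r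
  proof
    assume "degree q = 1"
    then obtain c e where "q = [:c, e:]" and "e \<noteq> 0" using degree1_coeffs by blast
    then have "poly \<phi> (- c / e) = 0" using that by simp
    with assms(2) show False by blast
  qed
  fix a b assume ab: "\<phi> = a * b"
  then have ab_nz: "a \<noteq> 0" "b \<noteq> 0" using nz by auto
  then have "degree a + degree b = 2" using ab assms(1) by (simp add: degree_mult_eq)
  moreover have "degree a \<noteq> 1" using no_linear_factor[OF ab] .
  moreover have "degree b \<noteq> 1" using no_linear_factor[of b a] ab by (simp add: mult.commute)
  ultimately show "a dvd 1 \<or> b dvd 1"
    using ab_nz by (auto simp: is_unit_iff_degree)
qed

lemma prime_elem_phi:
  fixes \<alpha> \<alpha>0 \<gamma> \<epsilon> :: "'a::{finite,field}"
  assumes nonsquare: "\<not> (\<exists>y. y ^ 2 = \<alpha>)" and "\<alpha>0 ^ k = \<alpha>" and "\<gamma> ^ 4 + 4 * \<alpha>0 = 0"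
    and "\<epsilon> = 1 \<or> \<epsilon> = -1"
  shows "prime_elem [:\<gamma> ^ 2 / 2, \<epsilon> * \<gamma>, 1:]"
proof -
  have two: "(2::'a) \<noteq> 0" using nonsquare exists_square_root_if_two_eq_zero by blast
  have "(4::'a) = 2 * 2" by simp
  then have "(4::'a) \<noteq> 0" using two by (metis mult_eq_0_iff)
  then have "\<alpha>0 = - (\<gamma> ^ 4 / 4)"
    using assms(3) by (simp add: field_simps add_eq_0_iff)
  have "poly [:\<gamma> ^ 2 / 2, \<epsilon> * \<gamma>, 1:] x \<noteq> 0" for x
  proof
    assume "poly [:\<gamma> ^ 2 / 2, \<epsilon> * \<gamma>, 1:] x = 0"
    moreover have "\<epsilon> ^ 2 = 1" using assms(4) by auto
    ultimately have "\<alpha>0 = ((2 * x + \<epsilon> * \<gamma>) * \<gamma> / 2) ^ 2"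
      using phi_root_imp_square[OF two] \<open>\<alpha>0 = _\<close> by simp
    then have "\<alpha> = (((2 * x + \<epsilon> * \<gamma>) * \<gamma> / 2) ^ k) ^ 2"
      using assms(2) by (simp flip: power_mult add: mult.commute)
    with nonsquare show False by blast
  qed
  then have "irreducible [:\<gamma> ^ 2 / 2, \<epsilon> * \<gamma>, 1:]"
    by (intro irreducible_quadratic_without_root) simp_all
  then show ?thesis by (rule field_poly_irreducible_imp_prime)
qed

lemma not_dvd_phi_adic_sum:
  fixes \<phi> :: "'a::field poly"
  assumes "1 < degree \<phi>" and "0 < k" and "a 0 \<noteq> 0 \<or> b 0 \<noteq> 0"
  shows "\<not> \<phi> dvd (\<Sum>j<k. [:b j, a j:] * \<phi> ^ j)"
proof
  assume dvd: "\<phi> dvd (\<Sum>j<k. [:b j, a j:] * \<phi> ^ j)"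
  obtain k' where k: "k = Suc k'" using assms(2) gr0_implies_Suc by blast
  have "(\<Sum>j<k. [:b j, a j:] * \<phi> ^ j) = [:b 0, a 0:] + \<phi> * (\<Sum>j<k'. [:b (Suc j), a (Suc j):] * \<phi> ^ j)"
    unfolding k sum.lessThan_Suc_shift by (simp add: sum_distrib_left algebra_simps)
  then have "\<phi> dvd [:b 0, a 0:]" using dvd by (simp add: dvd_add_left_iff)
  moreover have "[:b 0, a 0:] \<noteq> 0" using assms(3) by auto
  ultimately have "degree \<phi> \<le> degree [:b 0, a 0:]" by (rule dvd_imp_degree_le)
  moreover have "degree [:b 0, a 0:] \<le> 1" by (simp add: degree_pCons_eq_if)
  ultimately show False using assms(1) by linarith
qed

theorem theorem3p14:
  fixes p m s :: nat and \<alpha> \<alpha>0 \<gamma> \<epsilon> :: "'a::{finite,field}"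
  assumes "prime p" and "odd p" and "m > 0" and "s > 0"
    and "CARD('a) = p ^ m" and "p ^ m mod 4 = 3"
    and "\<alpha> \<noteq> 0" and "\<not> (\<exists>y. y ^ 2 = \<alpha>)"
    and "\<alpha>0 ^ (p ^ s) = \<alpha>" and "\<gamma> ^ 4 + 4 * \<alpha>0 = 0"
    and "\<epsilon> = 1 \<or> \<epsilon> = -1"
  defines "\<phi> \<equiv> [:\<gamma> ^ 2 / 2, \<epsilon> * \<gamma>, 1:]"
    and "N \<equiv> [:\<gamma> ^ 2 / 2, \<epsilon> * \<gamma>, 1:] ^ (p ^ s)"
  shows
   "card (gen_ideal N [(0, 0)]) = 1 \<and>
    card (gen_ideal N [(1, 0)]) = p ^ (4 * m * p ^ s) \<and>
    (\<forall>i. i \<le> p ^ s - 1 \<longrightarrow>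
        card (gen_ideal N [(0, \<phi> ^ i)]) = p ^ (2 * m * (p ^ s - i))) \<and>
    (\<forall>i t h a b. 1 \<le> i \<and> i \<le> p ^ s - 1 \<and> t < i \<and>
        (h = 0 \<or> (h = (\<Sum>j<i - t. [:b j, a j:] * \<phi> ^ j) \<and> (a 0 \<noteq> 0 \<or> b 0 \<noteq> 0))) \<longrightarrow>
        (h = 0 \<longrightarrow> card (gen_ideal N [(\<phi> ^ i, \<phi> ^ t * h)]) = p ^ (4 * m * (p ^ s - i))) \<and>
        (h \<noteq> 0 \<and> 2 * i \<le> p ^ s + t \<longrightarrow>
            card (gen_ideal N [(\<phi> ^ i, \<phi> ^ t * h)]) = p ^ (4 * m * (p ^ s - i))) \<and>
        (h \<noteq> 0 \<and> p ^ s + t < 2 * i \<longrightarrow>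
            card (gen_ideal N [(\<phi> ^ i, \<phi> ^ t * h)]) = p ^ (2 * m * (p ^ s - t)))) \<and>
    (\<forall>i t w h a b. 1 \<le> i \<and> i \<le> p ^ s - 1 \<and> t < w \<and>
        (h = 0 \<or> (h = (\<Sum>j<w - t. [:b j, a j:] * \<phi> ^ j) \<and> (a 0 \<noteq> 0 \<or> b 0 \<noteq> 0))) \<and>
        w < (LEAST U. rred N (0, \<phi> ^ U) \<in> gen_ideal N [(\<phi> ^ i, \<phi> ^ t * h)]) \<longrightarrow>
        card (gen_ideal N [(\<phi> ^ i, \<phi> ^ t * h), (0, \<phi> ^ w)]) = p ^ (2 * m * (2 * p ^ s - i - w)))"
proof -
  let ?n = "p ^ s"
  have prime: "prime_elem \<phi>" unfolding \<phi>_def using prime_elem_phi assms(8-11) by blast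
  then have nz: "\<phi> \<noteq> 0" by (rule prime_elem_not_zeroI)
  have N: "N = \<phi> ^ ?n" unfolding N_def \<phi>_def ..
  have card_pow: "CARD('a) ^ (degree \<phi> * k) = p ^ (2 * m * k)" for k
  proof -
    have "CARD('a) ^ (degree \<phi> * k) = (p ^ m) ^ (2 * k)" using assms(5) by (simp add: \<phi>_def mult_2)
    also have "\<dots> = p ^ (2 * m * k)" by (metis power_mult mult.assoc mult.commute)
    finally show ?thesis .
  qed
  have not_dvd: "\<not> \<phi> dvd (\<Sum>j<k. [:b j, a j:] * \<phi> ^ j)" if "0 < k" and "a 0 \<noteq> 0 \<or> b 0 \<noteq> 0" for k a b
    using not_dvd_phi_adic_sum[of \<phi> k a b] that by (simp add: \<phi>_def)
  show ?thesis
    unfolding N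
  proof (intro conjI allI impI; (elim conjE)?)
    show "card (gen_ideal (\<phi> ^ ?n) [(0, 0)]) = 1" by (simp add: gen_ideal_zero)
    show "card (gen_ideal (\<phi> ^ ?n) [(1, 0)]) = p ^ (4 * m * ?n)"
      using card_gen_ideal_phi_pow_single[OF nz, of 0 ?n 0] card_pow by (simp add: ac_simps)
    fix i assume "i \<le> ?n - 1"
    then show "card (gen_ideal (\<phi> ^ ?n) [(0, \<phi> ^ i)]) = p ^ (2 * m * (?n - i))"
      using card_gen_ideal_u_phi_pow[OF nz] card_pow by simp
  next
    fix i t :: nat and h :: "'a poly" and a b :: "nat \<Rightarrow> 'a" assume "i \<le> ?n - 1" and "h = 0"
    then show "card (gen_ideal (\<phi> ^ ?n) [(\<phi> ^ i, \<phi> ^ t * h)]) = p ^ (4 * m * (?n - i))"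
      using card_gen_ideal_phi_pow_single[OF nz, of i ?n 0] card_pow by (simp add: ac_simps)
  next
    fix i t :: nat and h :: "'a poly" and a b :: "nat \<Rightarrow> 'a" assume "i \<le> ?n - 1" and "2 * i \<le> ?n + t"
    then have "\<phi> ^ i dvd \<phi> ^ (?n - i + t) * h" by (simp add: le_imp_power_dvd)
    then have "\<phi> ^ i dvd \<phi> ^ (?n - i) * (\<phi> ^ t * h)" by (simp add: power_add mult.assoc)
    then show "card (gen_ideal (\<phi> ^ ?n) [(\<phi> ^ i, \<phi> ^ t * h)]) = p ^ (4 * m * (?n - i))"
      using card_gen_ideal_phi_pow_single[OF nz] \<open>i \<le> ?n - 1\<close> card_pow by (simp add: ac_simps)
  next
    fix i t :: nat and h :: "'a poly" and a b :: "nat \<Rightarrow> 'a" assume "i \<le> ?n - 1" "t < i" "h \<noteq> 0" "?n + t < 2 * i"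
      and "h = 0 \<or> h = (\<Sum>j<i - t. [:b j, a j:] * \<phi> ^ j) \<and> (a 0 \<noteq> 0 \<or> b 0 \<noteq> 0)"
    then have "\<not> \<phi> dvd h" using not_dvd by auto
    then show "card (gen_ideal (\<phi> ^ ?n) [(\<phi> ^ i, \<phi> ^ t * h)]) = p ^ (2 * m * (?n - t))"
      using card_gen_ideal_phi_pow_unit[OF prime] \<open>i \<le> ?n - 1\<close> \<open>?n + t < 2 * i\<close> card_pow by simp
  next
    fix i t w :: nat and h :: "'a poly" and a b :: "nat \<Rightarrow> 'a"
    assume "i \<le> ?n - 1" and "t < w"
      and h: "h = 0 \<or> h = (\<Sum>j<w - t. [:b j, a j:] * \<phi> ^ j) \<and> (a 0 \<noteq> 0 \<or> b 0 \<noteq> 0)"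
      and w: "w < (LEAST U. rred (\<phi> ^ ?n) (0, \<phi> ^ U) \<in> gen_ideal (\<phi> ^ ?n) [(\<phi> ^ i, \<phi> ^ t * h)])"
    have "h = 0 \<or> \<not> \<phi> dvd h" using h \<open>t < w\<close> not_dvd by auto
    moreover have "i \<le> ?n" using \<open>i \<le> ?n - 1\<close> by simp
    ultimately show "card (gen_ideal (\<phi> ^ ?n) [(\<phi> ^ i, \<phi> ^ t * h), (0, \<phi> ^ w)]) = p ^ (2 * m * (2 * ?n - i - w))"
      using card_gen_ideal_below_Least[OF prime _ _ w] card_pow by simp
  qed
qed

end
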